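(* Let $G$ be a daisy cube and let $P=v_1,v_2,v_3,v_4$ be a path on four vertices in $G$. Then $v_1$ and $v_3$ have a common neighbour different from $v_2$, or $v_2$ and $v_4$ have a common neighbour different from $v_3$.
   Context: For $B=\{0,1\}$ order $B^n$ componentwise: $u\le v$ iff $u_i\le v_i$ for all $i$. The hypercube $Q_n$ has vertex set $B^n$, two strings adjacent iff they differ in exactly one position. For $X\subseteq B^n$, $Q_n(X)$ is the subgraph of $Q_n$ induced by $\{u\in B^n: u\le x\text{ for some }x\in X\}$; a daisy cube is a graph of the form $Q_n(X)$. *)

theory Defs
  imports Main
begin

text \<open>Binary strings of length n are bool lists of length n (False = 0, True = 1).\<close>

definition bits :: "nat \<Rightarrow> bool list set" where
  "bits n = {u. length u = n}"

definition bits_le :: "bool list \<Rightarrow> bool list \<Rightarrow> bool" where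
  "bits_le u v \<longleftrightarrow> length u = length v \<and> (\<forall>i<length u. u ! i \<longrightarrow> v ! i)"

definition hc_adj :: "bool list \<Rightarrow> bool list \<Rightarrow> bool" where
  "hc_adj u v \<longleftrightarrow> length u = length v \<and> card {i. i < length u \<and> u ! i \<noteq> v ! i} = 1"

text \<open>Vertex set of the daisy cube Q_n(X); its edges are those of Q_n (induced subgraph).\<close>
definition daisy_vertices :: "nat \<Rightarrow> bool list set \<Rightarrow> bool list set" where
  "daisy_vertices n X = {u \<in> bits n. \<exists>x\<in>X. bits_le u x}"

end

theory Submission
  imports Defs
begin

text \<open>Write \<open>v\<^sub>2 = v\<^sub>1 + e\<^sub>i\<close>, \<open>v\<^sub>3 = v\<^sub>2 + e\<^sub>j\<close>, \<open>v\<^sub>4 = v\<^sub>3 + e\<^sub>k\<close> with \<open>i \<noteq> j \<noteq> k\<close>.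
  The path \<open>u, u + e\<^sub>i, u + e\<^sub>i + e\<^sub>j\<close> is completed to a square of \<open>Q\<^sub>n\<close> by \<open>u + e\<^sub>j\<close>,
  which lies below \<open>u\<close> if \<open>u\<^sub>j = 1\<close> and below \<open>u + e\<^sub>i + e\<^sub>j\<close> if \<open>u\<^sub>i = 0\<close>; since daisy
  cubes are down-closed it is then a vertex of \<open>G\<close>. If neither holds for \<open>u = v\<^sub>1\<close>, then
  \<open>(v\<^sub>2)\<^sub>j = (v\<^sub>1)\<^sub>j = 0\<close>, so the same argument applies to \<open>u = v\<^sub>2\<close> with \<open>j, k\<close> in place of \<open>i, j\<close>.\<close>

definition flip :: "bool list \<Rightarrow> nat \<Rightarrow> bool list" where
  "flip u i = u[i := \<not> u ! i]"

lemma length_flip [simp]: "length (flip u i) = length u"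
  by (simp add: flip_def)

lemma nth_flip: "k < length u \<Longrightarrow> flip u i ! k = (if k = i then \<not> u ! k else u ! k)"
  by (simp add: flip_def nth_list_update)

lemma flip_commute: "flip (flip u i) j = flip (flip u j) i"
  by (rule nth_equalityI) (auto simp: nth_flip)

lemma flip_flip [simp]: "flip (flip u i) i = u"
  by (rule nth_equalityI) (auto simp: nth_flip)

lemma hc_adj_flip: "i < length u \<Longrightarrow> hc_adj u (flip u i)"
proof -
  assume i: "i < length u"
  then have "{k. k < length u \<and> u ! k \<noteq> flip u i ! k} = {i}"
    by (auto simp: nth_flip split: if_splits)
  then show ?thesis by (simp add: hc_adj_def)
qed

lemma hc_adjE:
  assumes "hc_adj u v"
  obtains i where "i < length u" "v = flip u i"
proof -
  from assms have len: "length u = length v"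
    and "card {k. k < length u \<and> u ! k \<noteq> v ! k} = 1" by (auto simp: hc_adj_def)
  then obtain i where diff: "{k. k < length u \<and> u ! k \<noteq> v ! k} = {i}"
    by (auto simp: card_1_singleton_iff)
  then have i: "i < length u" "u ! i \<noteq> v ! i" by auto
  have "v = flip u i"
  proof (rule nth_equalityI)
    fix k assume "k < length v"
    then show "v ! k = flip u i ! k"
      using diff i len by (cases "k = i") (auto simp: nth_flip set_eq_iff)
  qed (use len in simp)
  with i that show ?thesis by blast
qed

lemma hc_adj_flip_flip:
  assumes "i < length u"
  shows "hc_adj (flip (flip u i) j) (flip u j)"
proof -
  have "flip (flip (flip u i) j) i = flip u j"
    by (metis flip_commute flip_flip)
  then show ?thesis
    using hc_adj_flip[of i "flip (flip u i) j"] assms by simp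
qed

lemma flip_le: "u ! i \<Longrightarrow> bits_le (flip u i) u"
  by (cases "i < length u") (auto simp: bits_le_def flip_def nth_list_update split: if_splits)

lemma daisy_vertices_down_closed:
  assumes "u \<in> daisy_vertices n X" "bits_le w u"
  shows "w \<in> daisy_vertices n X"
  using assms by (fastforce simp: daisy_vertices_def bits_def bits_le_def)

lemma daisy_square_completion:
  assumes u: "u \<in> daisy_vertices n X" and x: "flip (flip u i) j \<in> daisy_vertices n X"
    and ij: "i < length u" "j < length u" "i \<noteq> j"
    and "u ! j \<or> \<not> u ! i"
  shows "\<exists>w\<in>daisy_vertices n X. w \<noteq> flip u i
           \<and> hc_adj u w \<and> hc_adj (flip (flip u i) j) w"
proof (intro bexI conjI)
  show "flip u j \<noteq> flip u i"
    using ij by (metis nth_flip)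
  show "hc_adj u (flip u j)"
    using ij(2) by (rule hc_adj_flip)
  show "hc_adj (flip (flip u i) j) (flip u j)"
    using ij(1) by (rule hc_adj_flip_flip)
  show "flip u j \<in> daisy_vertices n X"
  proof (cases "u ! j")
    case True
    with u show ?thesis by (blast intro: daisy_vertices_down_closed flip_le)
  next
    case False
    with \<open>u ! j \<or> \<not> u ! i\<close> have "flip (flip u i) j ! i"
      using ij by (simp add: nth_flip)
    then have "bits_le (flip u j) (flip (flip u i) j)"
      using flip_le[of "flip (flip u i) j" i] by (simp add: flip_commute)
    with x show ?thesis by (rule daisy_vertices_down_closed)
  qed
qed

theorem lemma4p11:
  fixes n :: nat and X :: "bool list set" and v1 v2 v3 v4 :: "bool list"
  assumes "X \<subseteq> bits n"
    and "v1 \<in> daisy_vertices n X" and "v2 \<in> daisy_vertices n X"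
    and "v3 \<in> daisy_vertices n X" and "v4 \<in> daisy_vertices n X"
    and "distinct [v1, v2, v3, v4]"
    and "hc_adj v1 v2" and "hc_adj v2 v3" and "hc_adj v3 v4"
  shows "(\<exists>w\<in>daisy_vertices n X. w \<noteq> v2 \<and> hc_adj v1 w \<and> hc_adj v3 w)
       \<or> (\<exists>w\<in>daisy_vertices n X. w \<noteq> v3 \<and> hc_adj v2 w \<and> hc_adj v4 w)"
proof -
  obtain i where i: "i < length v1" and v2: "v2 = flip v1 i" using assms(7) by (rule hc_adjE)
  obtain j where j: "j < length v2" and v3: "v3 = flip v2 j" using assms(8) by (rule hc_adjE)
  obtain k where k: "k < length v3" and v4: "v4 = flip v3 k" using assms(9) by (rule hc_adjE)
  have "i \<noteq> j" "j \<noteq> k" using assms(6) v2 v3 v4 by auto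
  show ?thesis
  proof (cases "v1 ! j")
    case True
    then show ?thesis
      using daisy_square_completion[of v1 n X i j] assms(2,4) i j \<open>i \<noteq> j\<close> v2 v3 by simp
  next
    case False
    then have "\<not> v2 ! j" using v2 j \<open>i \<noteq> j\<close> by (simp add: nth_flip)
    then show ?thesis
      using daisy_square_completion[of v2 n X j k] assms(3,5) j k \<open>j \<noteq> k\<close> v3 v4 by simp
  qed
qed

end
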